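(* Let $m<n$ be positive integers and let $x_{i,j}\in[-1,1]$ for $i\in[m]$, $j\in[n]$. Then for any $a\in\mathbb{R}^m$ there exists a subset $S\subseteq[n]$ with $|S|\le m$ such that \[\Big|\sum_{i=1}^m a_i\prod_{j\in S}x_{i,j}\Big|\ge\frac{1}{4^m}\left(\frac1n\right)^{m(m+1)}\Big|\sum_{i=1}^m a_i\prod_{j=1}^n x_{i,j}\Big|.\]
   Context: An empty product equals $1$. *)

theory Defs
  imports Complex_Main
begin

end

theory Submission
  imports Defs
begin

text \<open>Let \<open>M\<close> bound \<open>|\<Sum>\<^sub>i a\<^sub>i \<Prod>\<^sub>j\<^sub>\<in>\<^sub>S x\<^sub>i\<^sub>j|\<close> over all \<open>S\<close> with at most \<open>m\<close> elements. To treat a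
  larger index set \<open>J \<union> {j}\<close>, fix a row \<open>r\<close> and write \<open>x\<^sub>i\<^sub>j = x\<^sub>r\<^sub>j + (x\<^sub>i\<^sub>j - x\<^sub>r\<^sub>j)\<close>. This splits
  the sum into \<open>x\<^sub>r\<^sub>j\<close> times the same sum over \<open>J\<close>, plus a sum over \<open>J\<close> with only \<open>m - 1\<close> rows
  and coefficients \<open>a\<^sub>i (x\<^sub>i\<^sub>j - x\<^sub>r\<^sub>j)\<close>. The latter is bounded by \<open>2M\<close> on sets of size at most
  \<open>m - 1\<close>, because it equals the old sum over \<open>S \<union> {j}\<close> minus \<open>x\<^sub>r\<^sub>j\<close> times the old sum over \<open>S\<close>.
  Induction on \<open>|J|\<close>, for all numbers of rows at once, gives the bound \<open>(2|J| + 1)\<^sup>m M\<close>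
  for the full sum, and \<open>(2n + 1)\<^sup>m \<le> 4\<^sup>m n^(m(m + 1))\<close>.\<close>

definition prod_comb :: "'i set \<Rightarrow> ('i \<Rightarrow> real) \<Rightarrow> ('i \<Rightarrow> 'j \<Rightarrow> real) \<Rightarrow> 'j set \<Rightarrow> real" where
  "prod_comb I a x S = (\<Sum>i\<in>I. a i * (\<Prod>j\<in>S. x i j))"

lemma prod_comb_empty_rows [simp]: "prod_comb {} a x S = 0"
  by (simp add: prod_comb_def)

lemma prod_comb_insert_eliminate:
  assumes "finite I" "r \<notin> I" "finite S" "j \<notin> S"
  shows "prod_comb (insert r I) a x (insert j S) =
    x r j * prod_comb (insert r I) a x S + prod_comb I (\<lambda>i. a i * (x i j - x r j)) x S"
  using assms
  by (simp add: prod_comb_def sum_distrib_left sum.distrib[symmetric] algebra_simps)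

lemma abs_prod_comb_eliminate_le:
  assumes "finite I" "r \<notin> I" "finite J" "j \<notin> J" "\<bar>x r j\<bar> \<le> 1"
    and small: "\<And>S. S \<subseteq> insert j J \<Longrightarrow> card S \<le> card (insert r I) \<Longrightarrow>
      \<bar>prod_comb (insert r I) a x S\<bar> \<le> M"
    and "S \<subseteq> J" "card S \<le> card I"
  shows "\<bar>prod_comb I (\<lambda>i. a i * (x i j - x r j)) x S\<bar> \<le> 2 * M"
proof -
  have "finite S" "j \<notin> S" using assms(3,4,7) finite_subset by auto
  have card_S: "card S \<le> card (insert r I)" and card_jS: "card (insert j S) \<le> card (insert r I)"
    using assms(1,2,8) \<open>finite S\<close> \<open>j \<notin> S\<close> by simp_all
  have "\<bar>x r j\<bar> * \<bar>prod_comb (insert r I) a x S\<bar> \<le> 1 * M"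
    using small[OF _ card_S] assms(5,7) by (intro mult_mono) auto
  then have "\<bar>x r j * prod_comb (insert r I) a x S\<bar> \<le> M"
    by (simp add: abs_mult)
  moreover have "\<bar>prod_comb (insert r I) a x (insert j S)\<bar> \<le> M"
    using small[OF _ card_jS] assms(7) by auto
  ultimately show ?thesis
    using prod_comb_insert_eliminate[OF assms(1,2) \<open>finite S\<close> \<open>j \<notin> S\<close>, of a x] by linarith
qed

lemma abs_prod_comb_le_small_subsets:
  assumes "finite J" "finite I"
    and "\<And>i j. i \<in> I \<Longrightarrow> j \<in> J \<Longrightarrow> \<bar>x i j\<bar> \<le> 1"
    and "\<And>S. S \<subseteq> J \<Longrightarrow> card S \<le> card I \<Longrightarrow> \<bar>prod_comb I a x S\<bar> \<le> M"
  shows "\<bar>prod_comb I a x J\<bar> \<le> (2 * real (card J) + 1) ^ card I * M"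
  using assms
proof (induction J arbitrary: I a M rule: finite_induct)
  case empty
  then show ?case by simp
next
  case (insert j J)
  have "0 \<le> M" using insert.prems(3)[of "{}"] by simp
  show ?case
  proof (cases "card (insert j J) \<le> card I \<or> I = {}")
    case True
    have "M \<le> (2 * real (card (insert j J)) + 1) ^ card I * M"
      using \<open>0 \<le> M\<close> by (simp add: mult_le_cancel_right1)
    then show ?thesis using True insert.prems(3)[of "insert j J"] \<open>0 \<le> M\<close> by auto
  next
    case False
    then obtain r I' where I: "I = insert r I'" "r \<notin> I'"
      by (meson equals0I mk_disjoint_insert)
    have "finite I'" using insert.prems(1) I by simp
    define b where "b = 2 * real (card J) + 1"
    define a' where "a' = (\<lambda>i. a i * (x i j - x r j))"
    have "\<bar>x r j\<bar> \<le> 1" using insert.prems(2) I by simp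
    have "\<bar>prod_comb I a x J\<bar> \<le> b ^ card I * M"
      unfolding b_def by (rule insert.IH[OF insert.prems(1)]) (use insert.prems in blast)+
    then have IH_rows: "\<bar>prod_comb I a x J\<bar> \<le> b ^ Suc (card I') * M"
      using I \<open>finite I'\<close> by simp
    have IH_eliminated: "\<bar>prod_comb I' a' x J\<bar> \<le> b ^ card I' * (2 * M)"
      unfolding b_def a'_def
    proof (rule insert.IH[OF \<open>finite I'\<close>])
      show "\<bar>x i k\<bar> \<le> 1" if "i \<in> I'" "k \<in> J" for i k
        using insert.prems(2) that I by simp
      show "\<bar>prod_comb I' (\<lambda>i. a i * (x i j - x r j)) x S\<bar> \<le> 2 * M"
        if "S \<subseteq> J" "card S \<le> card I'" for S
        using abs_prod_comb_eliminate_le[OF \<open>finite I'\<close> I(2) insert.hyps(1,2) \<open>\<bar>x r j\<bar> \<le> 1\<close>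
            insert.prems(3)[unfolded I] that] .
    qed
    have "\<bar>prod_comb I a x (insert j J)\<bar> \<le> \<bar>x r j\<bar> * \<bar>prod_comb I a x J\<bar> + \<bar>prod_comb I' a' x J\<bar>"
      using prod_comb_insert_eliminate[OF \<open>finite I'\<close> I(2) insert.hyps(1,2), of a x]
      unfolding I a'_def by (metis abs_mult abs_triangle_ineq)
    also have "\<dots> \<le> 1 * (b ^ Suc (card I') * M) + b ^ card I' * (2 * M)"
      using IH_rows IH_eliminated \<open>\<bar>x r j\<bar> \<le> 1\<close> by (intro add_mono mult_mono) auto
    also have "\<dots> = b ^ card I' * (b + 2) * M"
      by (simp add: algebra_simps)
    also have "\<dots> \<le> (b + 2) ^ card I' * (b + 2) * M"
      using \<open>0 \<le> M\<close> by (intro mult_right_mono power_mono) (auto simp: b_def)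
    also have "\<dots> = (2 * real (card (insert j J)) + 1) ^ card I * M"
      using insert.hyps \<open>finite I'\<close> I by (simp add: b_def algebra_simps)
    finally show ?thesis .
  qed
qed

lemma two_mul_add_one_power_le:
  fixes n :: real
  assumes "1 \<le> n"
  shows "(2 * n + 1) ^ m \<le> 4 ^ m * n ^ (m * (m + 1))"
proof -
  have "n \<le> n ^ (m + 1)"
    using assms power_increasing[of 1 "m + 1" n] by simp
  then have "2 * n + 1 \<le> 4 * n ^ (m + 1)"
    using assms by linarith
  then have "(2 * n + 1) ^ m \<le> (4 * n ^ (m + 1)) ^ m"
    using assms by (intro power_mono) auto
  also have "\<dots> = 4 ^ m * n ^ (m * (m + 1))"
    by (simp add: power_mult_distrib power_add mult.commute flip: power_mult)
  finally show ?thesis .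
qed

theorem lemma2:
  fixes m n :: nat and x :: "nat \<Rightarrow> nat \<Rightarrow> real" and a :: "nat \<Rightarrow> real"
  assumes "0 < m" and "m < n"
    and "\<And>i j. i \<in> {1..m} \<Longrightarrow> j \<in> {1..n} \<Longrightarrow> x i j \<in> {-1..1}"
  shows "\<exists>S. S \<subseteq> {1..n} \<and> card S \<le> m \<and>
    \<bar>\<Sum>i=1..m. a i * (\<Prod>j\<in>S. x i j)\<bar> \<ge>
      (1 / 4 ^ m) * (1 / real n) ^ (m * (m + 1)) * \<bar>\<Sum>i=1..m. a i * (\<Prod>j=1..n. x i j)\<bar>"
proof -
  let ?g = "\<lambda>S. \<bar>prod_comb {1..m} a x S\<bar>"
  define F where "F = {S. S \<subseteq> {1..n} \<and> card S \<le> m}"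
  have "finite F" "{} \<in> F" unfolding F_def by auto
  then have "Max (?g ` F) \<in> ?g ` F" by (intro Max_in) auto
  then obtain S where S: "S \<in> F" "?g S = Max (?g ` F)" by auto
  have S_max: "?g T \<le> ?g S" if "T \<subseteq> {1..n}" "card T \<le> m" for T
    using S(2) \<open>finite F\<close> that by (simp add: F_def)
  have "?g {1..n} \<le> (2 * real (card {1..n}) + 1) ^ card {1..m} * ?g S"
    using assms(3) S_max by (intro abs_prod_comb_le_small_subsets) (auto simp: abs_le_iff)
  also have "\<dots> = (2 * real n + 1) ^ m * ?g S"
    by simp
  also have "\<dots> \<le> 4 ^ m * real n ^ (m * (m + 1)) * ?g S"
    using assms(1,2) by (intro mult_right_mono two_mul_add_one_power_le) auto
  finally have "(1 / 4 ^ m) * (1 / real n) ^ (m * (m + 1)) * ?g {1..n} \<le> ?g S"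
    using assms(2) by (simp add: field_simps power_one_over)
  then show ?thesis
    using S(1) unfolding F_def prod_comb_def by auto
qed

end
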